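(* Let $\rho_{ABC}\in M_2(\mathbb{C})\otimes M_2(\mathbb{C})\otimes M_2(\mathbb{C})$ be a three-qubit state with $\mathrm{rank}(\rho_{ABC})=3$. Let $\{P_{a|0}\}_{a=0}^1,\{P_{a|1}\}_{a=0}^1$ be two nontrivial projective measurements on subsystem $A$ and $\{Q_{b|0}\}_{b=0}^1,\{Q_{b|1}\}_{b=0}^1$ two nontrivial projective measurements on subsystem $B$ that are different up to relabeling. Define $\sigma_{ab|xy}=\mathrm{Tr}_{AB}\big((P_{a|x}\otimes Q_{b|y}\otimes\mathbb{1})\rho_{ABC}\big)$ for $a,b,x,y\in\{0,1\}$. Then neither of the following two rank patterns can occur: (1) $\mathrm{rank}(\sigma_{ab|00})=1$ and $\mathrm{rank}(\sigma_{ab|11})=1$ for all $a,b$, while $\mathrm{rank}(\sigma_{ab|01})=\mathrm{rank}(\sigma_{ab|10})=2$ for all $a,b$; (2) for all $a,y\in\{0,1\}$: $\mathrm{rank}(\sigma_{a0|0y})=1$, $\mathrm{rank}(\sigma_{a1|0y})=2$, $\mathrm{rank}(\sigma_{a0|1y})=2$ and $\mathrm{rank}(\sigma_{a1|1y})=1$.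
   Context: A nontrivial projective measurement on $\mathbb{C}^2$ is a pair $\{P_0,P_1\}$ of rank-one orthogonal projections with $P_0+P_1=\mathbb{1}$. Two such measurements $\{Q_{b|0}\}_{b=0}^1,\{Q_{b|1}\}_{b=0}^1$ are "different up to relabeling" if $Q_{0|0}\ne Q_{0|1}$ and $Q_{0|0}\ne Q_{1|1}$. *)

theory Defs
  imports "HOL-Analysis.Analysis"
begin

text \<open>Qubit Hilbert space C^2 is indexed by the two-element type 2; the three-qubit
 space C^2 (x) C^2 (x) C^2 is indexed by 2 \<times> 2 \<times> 2 (first component = A, second = B,
 third = C).\<close>

definition cadj :: "complex^'n^'m \<Rightarrow> complex^'m^'n" where
  "cadj A = (\<chi> i j. cnj (A $ j $ i))"

definition orth_proj :: "complex^'n^'n \<Rightarrow> bool" where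
  "orth_proj P \<longleftrightarrow> P ** P = P \<and> cadj P = P"

definition rank_one_proj :: "complex^'n^'n \<Rightarrow> bool" where
  "rank_one_proj P \<longleftrightarrow> orth_proj P \<and> rank P = 1"

definition nontrivial_pm :: "complex^2^2 \<Rightarrow> complex^2^2 \<Rightarrow> bool" where
  "nontrivial_pm P0 P1 \<longleftrightarrow> rank_one_proj P0 \<and> rank_one_proj P1 \<and> P0 + P1 = mat 1"

definition psd :: "complex^'n^'n \<Rightarrow> bool" where
  "psd A \<longleftrightarrow> (\<forall>v::complex^'n. \<exists>r::real. r \<ge> 0 \<and>
      (\<Sum>i\<in>UNIV. \<Sum>j\<in>UNIV. cnj (v $ i) * A $ i $ j * v $ j) = complex_of_real r)"

definition density_op :: "complex^'n^'n \<Rightarrow> bool" where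
  "density_op \<rho> \<longleftrightarrow> psd \<rho> \<and> trace \<rho> = 1"

definition tensor_PQ1 :: "complex^2^2 \<Rightarrow> complex^2^2 \<Rightarrow> complex^(2\<times>2\<times>2)^(2\<times>2\<times>2)" where
  "tensor_PQ1 P Q = (\<chi> u v. P $ fst u $ fst v * Q $ fst (snd u) $ fst (snd v) *
                        (if snd (snd u) = snd (snd v) then 1 else 0))"

definition ptrace_AB :: "complex^(2\<times>2\<times>2)^(2\<times>2\<times>2) \<Rightarrow> complex^2^2" where
  "ptrace_AB M = (\<chi> k k'. \<Sum>i\<in>UNIV. \<Sum>j\<in>UNIV. M $ (i, j, k) $ (i, j, k'))"

definition assemblage ::
  "complex^(2\<times>2\<times>2)^(2\<times>2\<times>2) \<Rightarrow> (nat \<Rightarrow> nat \<Rightarrow> complex^2^2) \<Rightarrow> (nat \<Rightarrow> nat \<Rightarrow> complex^2^2)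
     \<Rightarrow> nat \<Rightarrow> nat \<Rightarrow> nat \<Rightarrow> nat \<Rightarrow> complex^2^2" where
  "assemblage \<rho> P Q a b x y = ptrace_AB (tensor_PQ1 (P a x) (Q b y) ** \<rho>)"

end

theory Submission
  imports Defs
begin

text \<open>
  Let K be the kernel of \<rho> and, for p \<in> C^2, let Y p = {y. p \<otimes> y \<in> K} be its slice, a
  subspace of W = C^2 \<otimes> C^2. As \<rho> is positive semidefinite, x lies in the kernel of
  Tr_AB((|\<pi>><\<pi>| \<otimes> |\<kappa>><\<kappa>| \<otimes> 1) \<rho>) iff \<rho> kills \<pi> \<otimes> \<kappa> \<otimes> x. So in either
  rank pattern, with p0, p1 and r0, r1 the vectors of the two measurements of A and
  Z = \<kappa>_00 \<otimes> C^2, the slices Y p0, Y p1, Y r0, Y r1 have dimension at least 2, Z meets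
  Y p0 and Y p1 but not Y r0 and Y r1, and dim K \<le> 5 because rank \<rho> = 3.

  For independent p, q and r parallel to neither, p \<otimes> Y p + q \<otimes> Y q meets r \<otimes> Y r only in
  r \<otimes> (Y p \<inter> Y q), so dim Y p + dim Y q + dim Y r \<le> dim K + dim (Y p \<inter> Y q). This
  forces dim (Y p0 \<inter> Y p1) \<le> 1 and dim H \<le> 3 for H = Y p0 + Y p1, while dim (Z \<inter> H) \<ge> 2.
  If Y r0 lay in H it would meet Z. Otherwise K is spanned by p0 \<otimes> Y p0, p1 \<otimes> Y p1 and a
  single r0 \<otimes> y with y \<notin> H, and contracting with det2 _ r1 shows that Y r1 lies in
  Y p0 \<inter> Y p1, which has dimension at most 1.
\<close>

subsection \<open>Dimension counting\<close>

lemma span_Un_subspaces: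
  "vec.subspace S \<Longrightarrow> vec.subspace T \<Longrightarrow> vec.span (S \<union> T) = {x + y |x y. x \<in> S \<and> y \<in> T}"
  by (simp add: vec.span_Un vec.span_eq_iff[THEN iffD2])

lemma dim_Un_Int:
  assumes "vec.subspace S" "vec.subspace T"
  shows "vec.dim (S \<union> T) + vec.dim (S \<inter> T) = vec.dim S + vec.dim T"
  using vec.dim_sums_Int[OF assms] vec.dim_span[of "S \<union> T"] span_Un_subspaces[OF assms] by simp

lemma dim_add_le_dim_Int:
  assumes "vec.subspace S" "vec.subspace T" "S \<union> T \<subseteq> W"
  shows "vec.dim S + vec.dim T \<le> vec.dim W + vec.dim (S \<inter> T)"
  using dim_Un_Int[OF assms(1,2)] vec.dim_subset[OF assms(3)] by linarith

lemma dim_add_le_if_Int_trivial: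
  assumes "vec.subspace S" "vec.subspace T" "S \<union> T \<subseteq> W" "S \<inter> T \<subseteq> {0}"
  shows "vec.dim S + vec.dim T \<le> vec.dim W"
proof -
  have "vec.dim (S \<inter> T) = 0" using assms(4) by simp
  then show ?thesis using dim_add_le_dim_Int[OF assms(1-3)] by linarith
qed

lemma scale_eq_scale_imp_eq:
  fixes y u :: "'a::field^'n"
  assumes "c \<noteq> 0" "c *s y = d *s u"
  shows "y = (d / c) *s u"
proof -
  have "c * y $ i = d * u $ i" for i
    using arg_cong[OF assms(2), of "\<lambda>v. v $ i"] by simp
  then show ?thesis
    using assms(1) by (simp add: vec_eq_iff field_simps)
qed

subsection \<open>Hermitian inner product and positive semidefinite matrices\<close>

definition cinner :: "complex^'n \<Rightarrow> complex^'n \<Rightarrow> complex" where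
  "cinner x y = (\<Sum>i\<in>UNIV. cnj (x $ i) * y $ i)"

lemma cinner_zero_right [simp]: "cinner x 0 = 0"
  by (simp add: cinner_def)

lemma cinner_add_left: "cinner (x + y) z = cinner x z + cinner y z"
  by (simp add: cinner_def distrib_right sum.distrib)

lemma cinner_add_right: "cinner x (y + z) = cinner x y + cinner x z"
  by (simp add: cinner_def distrib_left sum.distrib)

lemma cinner_scale_left: "cinner (c *s x) y = cnj c * cinner x y"
  by (simp add: cinner_def sum_distrib_left mult.assoc)

lemma cinner_scale_right: "cinner x (c *s y) = c * cinner x y"
  by (simp add: cinner_def sum_distrib_left algebra_simps)

lemma cinner_self: "cinner x x = of_real (\<Sum>i\<in>UNIV. (cmod (x $ i))\<^sup>2)"
  unfolding cinner_def of_real_sum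
  by (rule sum.cong) (simp_all add: mult.commute flip: complex_norm_square)

lemma cinner_self_eq_0_iff [simp]: "cinner x x = 0 \<longleftrightarrow> x = 0"
proof -
  have "cinner x x = 0 \<longleftrightarrow> (\<forall>i. (cmod (x $ i))\<^sup>2 = 0)"
    unfolding cinner_self of_real_eq_0_iff by (simp add: sum_nonneg_eq_0_iff)
  then show ?thesis by (simp add: vec_eq_iff)
qed

lemma cinner_matrix_adjoint: "cinner x (A *v y) = cinner (cadj A *v x) y"
proof -
  have "cinner x (A *v y) = (\<Sum>i\<in>UNIV. \<Sum>j\<in>UNIV. cnj (x $ i) * A $ i $ j * y $ j)"
    by (simp add: cinner_def matrix_vector_mult_def sum_distrib_left mult.assoc)
  also have "\<dots> = (\<Sum>j\<in>UNIV. \<Sum>i\<in>UNIV. cnj (x $ i) * A $ i $ j * y $ j)"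
    by (rule sum.swap)
  also have "\<dots> = cinner (cadj A *v x) y"
    by (simp add: cinner_def cadj_def matrix_vector_mult_def sum_distrib_left mult_ac)
  finally show ?thesis .
qed

lemma cinner_axis: "cinner v (axis j 1) = cnj (v $ j)"
  by (simp add: cinner_def axis_def if_distrib[of "(*) _"] cong: if_cong)

definition vcnj :: "complex^'n \<Rightarrow> complex^'n" where
  "vcnj x = (\<chi> i. cnj (x $ i))"

lemma vcnj_nth [simp]: "vcnj x $ i = cnj (x $ i)"
  by (simp add: vcnj_def)

lemma vcnj_zero [simp]: "vcnj 0 = 0"
  by (simp add: vec_eq_iff)

lemma vcnj_vcnj [simp]: "vcnj (vcnj x) = x"
  by (simp add: vec_eq_iff)

lemma span_vcnj_image_subset: "vcnj ` vec.span S \<subseteq> vec.span (vcnj ` S)"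
proof
  fix y assume "y \<in> vcnj ` vec.span S"
  then obtain x where x: "x \<in> vec.span S" and y: "y = vcnj x" by blast
  from x have "vcnj x \<in> vec.span (vcnj ` S)"
  proof (induction rule: vec.span_induct_alt)
    case base
    then show ?case by (simp add: vec.span_zero)
  next
    case (step c x z)
    have "vcnj (c *s x + z) = cnj c *s vcnj x + vcnj z" by (simp add: vec_eq_iff)
    then show ?case
      using step by (simp add: vec.span_add vec.span_scale vec.span_base)
  qed
  then show "y \<in> vec.span (vcnj ` S)" using y by simp
qed

lemma dim_vcnj_image_le: "vec.dim (vcnj ` S) \<le> vec.dim S"
proof -
  obtain B where B: "B \<subseteq> S" "vec.independent B" "S \<subseteq> vec.span B" "card B = vec.dim S"
    by (rule vec.basis_exists)
  have "vcnj ` S \<subseteq> vec.span (vcnj ` B)"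
    using B(3) span_vcnj_image_subset by blast
  then have "vec.dim (vcnj ` S) \<le> card (vcnj ` B)"
    using vec.dim_le_card vec.finiteI_independent[OF B(2)] by blast
  also have "\<dots> \<le> vec.dim S"
    using card_image_le vec.finiteI_independent[OF B(2)] B(4) by metis
  finally show ?thesis .
qed

lemma dim_null_space_add_rank_le:
  fixes A :: "complex^'n^'m"
  shows "vec.dim {x. A *v x = 0} + rank A \<le> CARD('n)"
proof -
  define N where "N = {x. A *v x = 0}"
  define R where "R = vec.span (vcnj ` rows A)"
  have N: "vec.subspace N"
    unfolding N_def by (rule vec.linear_subspace_kernel[OF matrix_vector_mul_linear_gen])
  have "N \<inter> R \<subseteq> {0}"
  proof
    fix x assume x: "x \<in> N \<inter> R"
    have "cinner y x = 0" if "y \<in> R" for y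
      using that unfolding R_def
    proof (induction rule: vec.span_induct_alt)
      case base
      then show ?case by (simp add: cinner_def)
    next
      case (step c r z)
      then obtain i where "r = vcnj (A $ i)" by (auto simp: rows_def row_def vec_lambda_eta)
      then have "cinner r x = (A *v x) $ i"
        by (simp add: cinner_def matrix_vector_mult_def)
      then show ?case
        using step x by (simp add: N_def cinner_add_left cinner_scale_left)
    qed
    then have "cinner x x = 0" using x by blast
    then show "x \<in> {0}" by simp
  qed
  then have "vec.dim N + vec.dim R \<le> vec.dim (UNIV :: (complex^'n) set)"
    unfolding R_def by (rule dim_add_le_if_Int_trivial[OF N vec.subspace_span subset_UNIV])
  then have "vec.dim N + vec.dim R \<le> CARD('n)"
    by (simp only: vec_dim_card)
  moreover have "rank A \<le> vec.dim R"
    unfolding R_def row_rank_def_gen vec.dim_span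
    using dim_vcnj_image_le[of "vcnj ` rows A"] by (simp add: image_image)
  ultimately show ?thesis unfolding N_def by linarith
qed

lemma psd_cinner: "psd A \<Longrightarrow> \<exists>r\<ge>0. cinner v (A *v v) = complex_of_real r"
  unfolding psd_def cinner_def matrix_vector_mult_def by (simp add: sum_distrib_left mult.assoc)

lemma nonpos_if_linear_le_quadratic:
  fixes b f :: real
  assumes "0 \<le> f" "\<And>s. 0 < s \<Longrightarrow> 2 * s * b \<le> s * s * f"
  shows "b \<le> 0"
proof (rule ccontr)
  assume "\<not> b \<le> 0"
  define s where "s = b / (f + 1)"
  have "0 < s" "s * f < b"
    using \<open>\<not> b \<le> 0\<close> assms(1) by (simp_all add: s_def field_simps)
  then have "s * (s * f) < s * (2 * b)"
    using \<open>\<not> b \<le> 0\<close> by (intro mult_strict_left_mono) simp_all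
  then show False using assms(2)[OF \<open>0 < s\<close>] by (simp add: algebra_simps)
qed

lemma psd_kernel:
  assumes psd: "psd A" and w: "cinner w (A *v w) = 0"
  shows "A *v w = 0"
proof -
  \<comment> \<open>Expand the form at w + t (A w) for t = 1, i and negative reals t.\<close>
  define u where "u = A *v w"
  define b where "b = (\<Sum>i\<in>UNIV. (cmod (u $ i))\<^sup>2)"
  define c where "c = cinner w (A *v u)"
  obtain f where f: "f \<ge> 0" "cinner u (A *v u) = complex_of_real f"
    using psd_cinner[OF psd] by blast
  have b: "cinner u u = complex_of_real b" "b \<ge> 0"
    unfolding b_def by (simp_all add: cinner_self sum_nonneg)
  have expand: "cinner (w + t *s u) (A *v (w + t *s u)) = t * c + cnj t * b + cnj t * t * f" for t
    using w f(2) b(1)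
    by (simp add: c_def u_def matrix_vector_right_distrib vector_scalar_commute cinner_add_left
        cinner_add_right cinner_scale_left cinner_scale_right algebra_simps)
  have real: "Im (cinner v (A *v v)) = 0 \<and> Re (cinner v (A *v v)) \<ge> 0" for v
    using psd_cinner[OF psd, of v] by auto
  have "Im c = 0" using real[of "w + 1 *s u"] unfolding expand by simp
  moreover have "Re c = b" using real[of "w + \<i> *s u"] unfolding expand by simp
  ultimately have c: "c = complex_of_real b" by (simp add: complex_eq_iff)
  have "2 * s * b \<le> s * s * f" for s
    using real[of "w + complex_of_real (- s) *s u"] unfolding expand c by (simp add: mult_ac)
  then have "b \<le> 0" by (intro nonpos_if_linear_le_quadratic[OF f(1)])
  then have "b = 0" using b(2) by simp
  then have "cinner u u = 0" using b(1) by simp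
  then show ?thesis by (simp add: u_def)
qed

subsection \<open>Rank-one projections on C^2\<close>

lemma full_rank_iff_trivial_kernel:
  fixes A :: "'a::field^'n^'m"
  shows "rank A = CARD('n) \<longleftrightarrow> (\<forall>x. A *v x = 0 \<longrightarrow> x = 0)"
  using vec.dim_eq_full[of "rows A"] vec_dim_card vec.dim_UNIV
  by (simp add: row_rank_def_gen vec.dimension_def card_cart_basis
      flip: matrix_left_invertible_ker matrix_left_invertible_span_rows_gen)

lemma matrix_vector_mult_axis_nth: "(A *v axis j 1) $ i = A $ i $ j"
  by (simp add: matrix_vector_mult_def axis_def if_distrib[of "(*) _"] cong: if_cong)

lemma rank_one_range_line:
  fixes A :: "'a::field^'n^'m"
  assumes "rank A = 1"
  obtains c where "\<And>y. \<exists>l. A *v y = l *s c"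
proof -
  obtain B where B: "B \<subseteq> rows A" "vec.independent B" "rows A \<subseteq> vec.span B" "card B = 1"
    using vec.basis_exists[of "rows A"] assms unfolding row_rank_def_gen by metis
  then obtain \<xi> where "B = {\<xi>}" by (meson card_1_singletonE)
  then have "\<forall>i. \<exists>k. A $ i = k *s \<xi>"
    using B(3) by (auto simp: rows_def row_def vec_lambda_eta vec.span_singleton)
  then obtain k where k: "\<And>i. A $ i = k i *s \<xi>" by metis
  have "A *v y = (\<Sum>j\<in>UNIV. \<xi> $ j * y $ j) *s (\<chi> i. k i)" for y
    by (simp add: vec_eq_iff matrix_vector_mult_def k sum_distrib_left mult_ac)
  then show ?thesis using that by blast
qed

definition proj_onto :: "complex^'n \<Rightarrow> complex^'n^'n" where
  "proj_onto v = (\<chi> i j. v $ i * cnj (v $ j) / cinner v v)"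

lemma rank_one_proj_eq_proj_onto:
  assumes "rank_one_proj R"
  obtains v where "v \<noteq> 0" "R = proj_onto v"
proof -
  have idem: "R ** R = R" and herm: "cadj R = R" and rank: "rank R = 1"
    using assms unfolding rank_one_proj_def orth_proj_def by auto
  obtain c where line: "\<And>y. \<exists>l. R *v y = l *s c"
    using rank_one_range_line[OF rank] by blast
  have "R \<noteq> 0"
    using rank by (auto simp: row_rank_def_gen rows_def row_def)
  then obtain x where v: "R *v x \<noteq> 0"
    by (metis matrix_vector_mult_axis_nth vec_eq_iff zero_index)
  define v where "v = R *v x"
  have Rv: "R *v v = v"
    unfolding v_def by (simp add: matrix_vector_mul_assoc idem)
  have "\<exists>m. R *v y = m *s v" for y
  proof -
    obtain l l0 where "R *v y = l *s c" "v = l0 *s c" using line unfolding v_def by metis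
    then have "R *v y = (l / l0) *s v"
      using v unfolding v_def by (auto simp: vector_smult_assoc)
    then show ?thesis by blast
  qed
  then obtain m where m: "\<And>y. R *v y = m y *s v" by metis
  have "cinner v (R *v y) = cinner v y" for y
    using cinner_matrix_adjoint[of v R y] by (simp add: herm Rv)
  then have "m (axis j 1) * cinner v v = cnj (v $ j)" for j
    by (simp add: m cinner_scale_right cinner_axis)
  moreover have "cinner v v \<noteq> 0"
    using v unfolding v_def by simp
  ultimately have "m (axis j 1) = cnj (v $ j) / cinner v v" for j
    by (simp add: eq_divide_eq)
  then have "R $ i $ j = v $ i * cnj (v $ j) / cinner v v" for i j
    using m[of "axis j 1"] by (simp add: vec_eq_iff flip: matrix_vector_mult_axis_nth)
  then have "R = proj_onto v" by (simp add: proj_onto_def vec_eq_iff)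
  then show ?thesis using that v unfolding v_def by blast
qed

lemma proj_onto_scale: "k \<noteq> 0 \<Longrightarrow> proj_onto (k *s v) = proj_onto v"
  by (cases "v = 0")
    (simp_all add: proj_onto_def vec_eq_iff cinner_scale_left cinner_scale_right field_simps)

definition det2 :: "'a::comm_ring^2 \<Rightarrow> 'a^2 \<Rightarrow> 'a" where
  "det2 u v = u $ 1 * v $ 2 - u $ 2 * v $ 1"

lemma det2_self [simp]: "det2 u u = 0"
  by (simp add: det2_def mult.commute)

lemma det2_zero [simp]: "det2 0 v = 0" "det2 u 0 = 0"
  by (simp_all add: det2_def)

lemma det2_eq_0_imp_parallel:
  fixes u v :: "'a::field^2"
  assumes "det2 u v = 0" "v \<noteq> 0"
  obtains l where "u = l *s v"
proof (cases "v $ 1 = 0")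
  case True
  with assms have "v $ 2 \<noteq> 0" "u $ 1 = 0"
    by (auto simp: det2_def vec_eq_iff forall_2)
  then have "u = (u $ 2 / v $ 2) *s v"
    using True by (simp add: vec_eq_iff forall_2)
  then show ?thesis by (rule that)
next
  case False
  then have "u = (u $ 1 / v $ 1) *s v"
    using assms(1) by (simp add: vec_eq_iff forall_2 det2_def field_simps)
  then show ?thesis by (rule that)
qed

lemma det2_cramer:
  fixes p q r :: "'a::field^2"
  assumes "det2 p q \<noteq> 0"
  shows "r = (det2 r q / det2 p q) *s p + (det2 p r / det2 p q) *s q"
proof -
  have "det2 r q * p $ i + det2 p r * q $ i = r $ i * det2 p q" for i
    using exhaust_2[of i] by (auto simp: det2_def algebra_simps)
  then show ?thesis
    using assms by (simp add: vec_eq_iff add_divide_distrib [symmetric] eq_divide_eq)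
qed

lemma det2_ne_0_if_proj_onto_ne:
  assumes "proj_onto u \<noteq> proj_onto v" "u \<noteq> 0" "v \<noteq> 0"
  shows "det2 u v \<noteq> 0"
  by (metis assms det2_eq_0_imp_parallel proj_onto_scale vector_mul_eq_0)

lemma nontrivial_pm_neq:
  assumes "nontrivial_pm R0 R1"
  shows "R0 \<noteq> R1"
proof
  assume "R0 = R1"
  then have sum: "R0 + R0 = mat 1" and idem: "R0 ** R0 = R0"
    using assms unfolding nontrivial_pm_def rank_one_proj_def orth_proj_def by auto
  have "R0 $ 1 $ 1 = 1 / 2" "R0 $ 1 $ 2 = 0"
    using arg_cong[OF sum, of "\<lambda>M. M $ 1 $ 1"] arg_cong[OF sum, of "\<lambda>M. M $ 1 $ 2"]
    by (simp_all add: mat_def field_simps)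
  moreover have "(R0 ** R0) $ 1 $ 1 = R0 $ 1 $ 1 * R0 $ 1 $ 1 + R0 $ 1 $ 2 * R0 $ 2 $ 1"
    by (simp add: matrix_matrix_mult_def sum_2)
  ultimately show False using idem by auto
qed

lemma nontrivial_pm_proj_onto:
  assumes "nontrivial_pm P0 P1"
  obtains u v where "u \<noteq> 0" "v \<noteq> 0" "P0 = proj_onto u" "P1 = proj_onto v" "det2 u v \<noteq> 0"
proof -
  obtain u v where "u \<noteq> 0" "P0 = proj_onto u" "v \<noteq> 0" "P1 = proj_onto v"
    using assms rank_one_proj_eq_proj_onto unfolding nontrivial_pm_def by metis
  moreover have "det2 u v \<noteq> 0"
    using calculation nontrivial_pm_neq[OF assms] det2_ne_0_if_proj_onto_ne by blast
  ultimately show ?thesis using that by blast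
qed

lemma measurements_proj_onto:
  fixes P :: "nat \<Rightarrow> nat \<Rightarrow> complex^2^2"
  assumes "\<forall>x<2. nontrivial_pm (P 0 x) (P 1 x)"
  obtains \<pi> where "\<And>a x. a < 2 \<Longrightarrow> x < 2 \<Longrightarrow> \<pi> a x \<noteq> 0 \<and> P a x = proj_onto (\<pi> a x)"
    and "det2 (\<pi> 0 0) (\<pi> 1 0) \<noteq> 0" "det2 (\<pi> 0 1) (\<pi> 1 1) \<noteq> 0"
proof -
  have "\<forall>x. \<exists>u v. x < 2 \<longrightarrow> u \<noteq> 0 \<and> v \<noteq> 0 \<and> P 0 x = proj_onto u \<and> P 1 x = proj_onto v \<and> det2 u v \<noteq> 0"
    using assms nontrivial_pm_proj_onto by metis
  then obtain u v where uv: "\<And>x. x < 2 \<Longrightarrow> u x \<noteq> 0 \<and> v x \<noteq> 0 \<and> P 0 x = proj_onto (u x) \<and>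
      P 1 x = proj_onto (v x) \<and> det2 (u x) (v x) \<noteq> 0"
    by metis
  show ?thesis
  proof (rule that[of "\<lambda>a x. if a = 0 then u x else v x"])
    show "(if a = 0 then u x else v x) \<noteq> 0 \<and> P a x = proj_onto (if a = 0 then u x else v x)"
      if "a < 2" "x < 2" for a x
      using uv[OF that(2)] that(1) less_2_cases by auto
  qed (use uv[of 0] uv[of 1] in simp_all)
qed

lemma nontrivial_pm_complement_neq:
  assumes "nontrivial_pm P0 P1" "nontrivial_pm P0' P1'" "P0 \<noteq> P0'"
  shows "P1 \<noteq> P1'"
  using assms unfolding nontrivial_pm_def by (metis add_right_cancel)

subsection \<open>Slices of a subspace of C^2 \<otimes> W\<close>

definition vec_tensor :: "'a::field^2 \<Rightarrow> 'a^'b \<Rightarrow> 'a^(2 \<times> 'b)" (infixr \<open>\<otimes>\<close> 70) where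
  "p \<otimes> y = (\<chi> u. p $ fst u * y $ snd u)"

lemma vec_tensor_nth [simp]: "(p \<otimes> y) $ (i, j) = p $ i * y $ j"
  by (simp add: vec_tensor_def)

lemma vec_tensor_add_left: "(p + q) \<otimes> y = p \<otimes> y + q \<otimes> y"
  by (simp add: vec_eq_iff distrib_right)

lemma vec_tensor_scale_left: "(c *s p) \<otimes> y = c *s (p \<otimes> y)"
  by (simp add: vec_eq_iff)

lemma vec_tensor_add_right: "p \<otimes> (y + z) = p \<otimes> y + p \<otimes> z"
  by (simp add: vec_eq_iff distrib_left)

lemma vec_tensor_scale_right: "p \<otimes> (c *s y) = c *s (p \<otimes> y)"
  by (simp add: vec_eq_iff mult.left_commute)

lemma linear_vec_tensor: "Vector_Spaces.linear (*s) (*s) (vec_tensor p)"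
  by (simp add: Vector_Spaces.linear_iff vec_tensor_add_right vec_tensor_scale_right
      vec.vector_space_axioms)

lemma vec_tensor_eq_0_iff [simp]: "p \<otimes> y = 0 \<longleftrightarrow> p = 0 \<or> y = 0"
  by (auto simp: vec_eq_iff)

lemma inj_vec_tensor: "p \<noteq> 0 \<Longrightarrow> inj (vec_tensor p)"
  by (subst vec.linear_inj_iff_eq_0[OF linear_vec_tensor]) simp

lemma dim_vec_tensor_image: "p \<noteq> 0 \<Longrightarrow> vec.dim (vec_tensor p ` S) = vec.dim S"
  using vec.dim_image_eq[OF linear_vec_tensor] inj_vec_tensor by (blast intro: inj_on_subset)

definition contract_det :: "'a::field^2 \<Rightarrow> 'a^(2 \<times> 'b) \<Rightarrow> 'a^'b" where
  "contract_det r w = (\<chi> j. w $ (1, j) * r $ 2 - w $ (2, j) * r $ 1)"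

lemma contract_det_vec_tensor [simp]: "contract_det r (p \<otimes> y) = det2 p r *s y"
  by (simp add: contract_det_def det2_def vec_eq_iff algebra_simps)

lemma contract_det_add: "contract_det r (v + w) = contract_det r v + contract_det r w"
  by (simp add: contract_det_def vec_eq_iff algebra_simps)

lemma contract_det_diff: "contract_det r (v - w) = contract_det r v - contract_det r w"
  by (simp add: contract_det_def vec_eq_iff algebra_simps)

lemma contract_det_scale: "contract_det r (c *s w) = c *s contract_det r w"
  by (simp add: contract_det_def vec_eq_iff algebra_simps)

definition tensor_slice :: "('a::field^(2 \<times> 'b)) set \<Rightarrow> 'a^2 \<Rightarrow> ('a^'b) set" where
  "tensor_slice K p = {y. p \<otimes> y \<in> K}"

lemma subspace_tensor_slice: "vec.subspace K \<Longrightarrow> vec.subspace (tensor_slice K p)"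
  unfolding tensor_slice_def by (rule vec.linear_subspace_linear_preimage[OF linear_vec_tensor])

lemma tensor_slice_parallel:
  assumes "vec.subspace K" "det2 r p = 0" "r \<noteq> 0" "p \<noteq> 0"
  shows "tensor_slice K r = tensor_slice K p"
proof -
  obtain l where l: "r = l *s p" using det2_eq_0_imp_parallel assms(2,4) by blast
  with assms(3) have "l \<noteq> 0" by auto
  have "l *s x \<in> K \<longleftrightarrow> x \<in> K" for x
  proof
    assume "l *s x \<in> K"
    then have "(1 / l) *s (l *s x) \<in> K" by (rule vec.subspace_scale[OF assms(1)])
    then show "x \<in> K" using \<open>l \<noteq> 0\<close> by (simp add: vector_smult_assoc)
  qed (rule vec.subspace_scale[OF assms(1)])
  then show ?thesis by (simp add: tensor_slice_def l vec_tensor_scale_left)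
qed

lemma tensor_slice_Int_subset:
  assumes "vec.subspace K" "det2 p q \<noteq> 0"
  shows "tensor_slice K p \<inter> tensor_slice K q \<subseteq> tensor_slice K r"
proof
  fix y assume "y \<in> tensor_slice K p \<inter> tensor_slice K q"
  then have "p \<otimes> y \<in> K" "q \<otimes> y \<in> K" by (auto simp: tensor_slice_def)
  moreover have "r \<otimes> y = (det2 r q / det2 p q) *s (p \<otimes> y) + (det2 p r / det2 p q) *s (q \<otimes> y)"
    by (subst det2_cramer[OF assms(2), of r]) (simp add: vec_tensor_add_left vec_tensor_scale_left)
  ultimately show "y \<in> tensor_slice K r"
    using assms(1) by (simp add: tensor_slice_def vec.subspace_add vec.subspace_scale)
qed

lemma vec_tensor_eq_sum_imp_mem_Int:
  assumes "vec.subspace S" "vec.subspace T" "det2 r p \<noteq> 0" "det2 r q \<noteq> 0"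
    and "r \<otimes> y = p \<otimes> u + q \<otimes> v" "u \<in> S" "v \<in> T"
  shows "y \<in> S \<inter> T"
proof -
  have "det2 r q *s y = det2 p q *s u" "det2 r p *s y = det2 q p *s v"
    using arg_cong[OF assms(5), of "contract_det q"] arg_cong[OF assms(5), of "contract_det p"]
    by (simp_all add: contract_det_add)
  then have yu: "y = (det2 p q / det2 r q) *s u" and yv: "y = (det2 q p / det2 r p) *s v"
    using assms(3,4) scale_eq_scale_imp_eq by blast+
  have "y \<in> S" unfolding yu by (rule vec.subspace_scale[OF assms(1,6)])
  moreover have "y \<in> T" unfolding yv by (rule vec.subspace_scale[OF assms(2,7)])
  ultimately show ?thesis by simp
qed

lemma dim_vec_tensor_fan:
  assumes "vec.subspace S" "vec.subspace T" "det2 p q \<noteq> 0"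
  shows "vec.dim (vec_tensor p ` S \<union> vec_tensor q ` T) = vec.dim S + vec.dim T"
proof -
  have "p \<noteq> 0" "q \<noteq> 0" using assms(3) by auto
  have "vec_tensor p ` S \<inter> vec_tensor q ` T \<subseteq> {0}"
  proof
    fix w assume "w \<in> vec_tensor p ` S \<inter> vec_tensor q ` T"
    then obtain u v where u: "w = p \<otimes> u" and v: "w = q \<otimes> v" by blast
    have "det2 p q *s u = contract_det q w" by (simp add: u)
    also have "\<dots> = 0" by (simp add: v)
    finally show "w \<in> {0}" using assms(3) u by simp
  qed
  then have "vec.dim (vec_tensor p ` S \<inter> vec_tensor q ` T) = 0" by simp
  then show ?thesis
    using dim_Un_Int[OF vec.linear_subspace_image[OF linear_vec_tensor[of p] assms(1)]
        vec.linear_subspace_image[OF linear_vec_tensor[of q] assms(2)]]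
      dim_vec_tensor_image[OF \<open>p \<noteq> 0\<close>, of S] dim_vec_tensor_image[OF \<open>q \<noteq> 0\<close>, of T]
    by linarith
qed

definition tensor_fan :: "('a::field^(2 \<times> 'b::finite)) set \<Rightarrow> 'a^2 \<Rightarrow> 'a^2 \<Rightarrow> ('a^(2 \<times> 'b)) set" where
  "tensor_fan K p q = vec.span (vec_tensor p ` tensor_slice K p \<union> vec_tensor q ` tensor_slice K q)"

lemma subspace_tensor_fan: "vec.subspace (tensor_fan K p q)"
  by (simp add: tensor_fan_def)

lemma span_tensor_fan [simp]: "vec.span (tensor_fan K p q) = tensor_fan K p q"
  by (simp add: tensor_fan_def vec.span_span)

lemma tensor_fan_subset: "vec.subspace K \<Longrightarrow> tensor_fan K p q \<subseteq> K"
  unfolding tensor_fan_def by (rule vec.span_minimal) (auto simp: tensor_slice_def)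

lemma dim_tensor_fan:
  "vec.subspace K \<Longrightarrow> det2 p q \<noteq> 0 \<Longrightarrow>
    vec.dim (tensor_fan K p q) = vec.dim (tensor_slice K p) + vec.dim (tensor_slice K q)"
  unfolding tensor_fan_def by (simp add: dim_vec_tensor_fan subspace_tensor_slice)

lemma mem_tensor_fanE:
  assumes "vec.subspace K" "w \<in> tensor_fan K p q"
  obtains u v where "u \<in> tensor_slice K p" "v \<in> tensor_slice K q" "w = p \<otimes> u + q \<otimes> v"
proof -
  have "vec.subspace (vec_tensor x ` tensor_slice K x)" for x
    by (intro vec.linear_subspace_image[OF linear_vec_tensor] subspace_tensor_slice assms(1))
  then show ?thesis
    using assms(2) span_Un_subspaces that unfolding tensor_fan_def by blast
qed

lemma vec_tensor_mem_tensor_fan: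
  assumes "vec.subspace K" "r \<otimes> y \<in> tensor_fan K p q" "det2 r p \<noteq> 0" "det2 r q \<noteq> 0"
  shows "y \<in> tensor_slice K p \<inter> tensor_slice K q"
  using assms(2) by (rule mem_tensor_fanE[OF assms(1)])
    (use vec_tensor_eq_sum_imp_mem_Int[OF subspace_tensor_slice subspace_tensor_slice assms(3,4)]
      assms(1) in blast)

lemma dim_tensor_slices_le:
  fixes K :: "('a::field^(2 \<times> 'b::finite)) set"
  defines "Y \<equiv> tensor_slice K"
  assumes K: "vec.subspace K" and det: "det2 p q \<noteq> 0" "det2 r p \<noteq> 0" "det2 r q \<noteq> 0"
  shows "vec.dim (Y p) + vec.dim (Y q) + vec.dim (Y r) \<le> vec.dim K + vec.dim (Y p \<inter> Y q)"
proof -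
  have "r \<noteq> 0" using det by auto
  define M where "M = vec_tensor r ` Y r"
  have M: "vec.subspace M" "vec.dim M = vec.dim (Y r)" "M \<subseteq> K"
    unfolding M_def Y_def
    using vec.linear_subspace_image[OF linear_vec_tensor subspace_tensor_slice[OF K]]
      dim_vec_tensor_image[OF \<open>r \<noteq> 0\<close>] by (auto simp: tensor_slice_def)
  have "tensor_fan K p q \<inter> M \<subseteq> vec_tensor r ` (Y p \<inter> Y q)"
    unfolding M_def Y_def using vec_tensor_mem_tensor_fan[OF K _ det(2,3)] by blast
  then have "vec.dim (tensor_fan K p q \<inter> M) \<le> vec.dim (Y p \<inter> Y q)"
    using vec.dim_subset dim_vec_tensor_image[OF \<open>r \<noteq> 0\<close>] by metis
  moreover have "tensor_fan K p q \<union> M \<subseteq> K"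
    using tensor_fan_subset[OF K] M(3) by blast
  then have "vec.dim (tensor_fan K p q) + vec.dim M \<le> vec.dim K + vec.dim (tensor_fan K p q \<inter> M)"
    by (rule dim_add_le_dim_Int[OF subspace_tensor_fan M(1)])
  ultimately show ?thesis
    using dim_tensor_fan[OF K det(1)] M(2) unfolding Y_def by linarith
qed

lemma span_insert_tensor_fan:
  fixes K :: "('a::field^(2 \<times> 'b::finite)) set"
  defines "Y \<equiv> tensor_slice K"
  assumes K: "vec.subspace K" "vec.dim K \<le> vec.dim (Y p) + vec.dim (Y q) + 1"
    and det: "det2 p q \<noteq> 0" "det2 r p \<noteq> 0" "det2 r q \<noteq> 0"
    and y: "y \<in> Y r" "y \<notin> vec.span (Y p \<union> Y q)"
  shows "vec.span (insert (r \<otimes> y) (tensor_fan K p q)) = K"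
proof (rule vec.subspace_dim_equal[OF vec.subspace_span K(1)])
  have "r \<otimes> y \<notin> tensor_fan K p q"
    using vec_tensor_mem_tensor_fan[OF K(1) _ det(2,3)] y(2) vec.span_superset
    unfolding Y_def by blast
  then show "vec.dim K \<le> vec.dim (vec.span (insert (r \<otimes> y) (tensor_fan K p q)))"
    using K(2) dim_tensor_fan[OF K(1) det(1)] unfolding Y_def by (simp add: vec.dim_insert)
  show "vec.span (insert (r \<otimes> y) (tensor_fan K p q)) \<subseteq> K"
    using tensor_fan_subset[OF K(1)] y(1) vec.span_minimal[OF _ K(1)]
    by (simp add: Y_def tensor_slice_def)
qed

lemma tensor_slice_subset_Int:
  fixes K :: "('a::field^(2 \<times> 'b::finite)) set"
  defines "Y \<equiv> tensor_slice K"
  assumes K: "vec.subspace K" "vec.dim K \<le> vec.dim (Y p) + vec.dim (Y q) + 1"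
    and det: "det2 p q \<noteq> 0" "det2 r p \<noteq> 0" "det2 r q \<noteq> 0" "det2 r s \<noteq> 0"
      "det2 s p \<noteq> 0" "det2 s q \<noteq> 0"
    and y: "y \<in> Y r" "y \<notin> vec.span (Y p \<union> Y q)"
  shows "Y s \<subseteq> Y p \<inter> Y q"
proof
  fix d assume "d \<in> Y s"
  then have "s \<otimes> d \<in> vec.span (insert (r \<otimes> y) (tensor_fan K p q))"
    using span_insert_tensor_fan[OF K[unfolded Y_def] det(1-3) y[unfolded Y_def]]
    by (simp add: Y_def tensor_slice_def)
  then obtain c where "s \<otimes> d - c *s (r \<otimes> y) \<in> tensor_fan K p q"
    unfolding vec.span_insert span_tensor_fan by blast
  then obtain u v where uv: "u \<in> Y p" "v \<in> Y q" "s \<otimes> d - c *s (r \<otimes> y) = p \<otimes> u + q \<otimes> v"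
    using mem_tensor_fanE[OF K(1)] unfolding Y_def by blast
  have "c = 0"
  proof (rule ccontr)
    assume "c \<noteq> 0"
    define z where "z = det2 p s *s u + det2 q s *s v"
    have "(- c * det2 r s) *s y = 1 *s z"
      using arg_cong[OF uv(3), of "contract_det s"] unfolding z_def
      by (simp add: contract_det_add contract_det_diff contract_det_scale vector_smult_assoc)
    then have yz: "y = (1 / (- c * det2 r s)) *s z"
      using \<open>c \<noteq> 0\<close> det(4) by (intro scale_eq_scale_imp_eq) simp_all
    have "z \<in> vec.span (Y p \<union> Y q)"
      unfolding z_def using uv(1,2)
      by (intro vec.span_add vec.span_scale) (auto intro: vec.span_base)
    then show False
      using y(2) vec.span_scale unfolding yz by blast
  qed
  then show "d \<in> Y p \<inter> Y q"
    using vec_tensor_eq_sum_imp_mem_Int[OF subspace_tensor_slice subspace_tensor_slice det(5,6)] K(1) uv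
    unfolding Y_def by simp
qed

lemma det2_ne_0_if_slices_differ:
  assumes "vec.subspace K" "r \<noteq> 0" "p \<noteq> 0"
    and "vec.dim (Z \<inter> tensor_slice K r) = 0" "0 < vec.dim (Z \<inter> tensor_slice K p)"
  shows "det2 r p \<noteq> 0"
proof
  assume "det2 r p = 0"
  then have "tensor_slice K r = tensor_slice K p" by (rule tensor_slice_parallel[OF assms(1) _ assms(2,3)])
  then show False using assms(4,5) by (simp del: vec.dim_eq_0)
qed

lemma dim_Int_span_Un_ge:
  assumes "vec.subspace Z" "vec.subspace S" "vec.subspace T"
  shows "vec.dim (Z \<inter> S) + vec.dim (Z \<inter> T) \<le> vec.dim (Z \<inter> vec.span (S \<union> T)) + vec.dim (Z \<inter> S \<inter> T)"
proof -
  have "Z \<inter> S \<union> Z \<inter> T \<subseteq> Z \<inter> vec.span (S \<union> T)" "Z \<inter> S \<inter> (Z \<inter> T) = Z \<inter> S \<inter> T"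
    using vec.span_superset by blast+
  then show ?thesis
    using dim_add_le_dim_Int[OF vec.subspace_inter[OF assms(1,2)] vec.subspace_inter[OF assms(1,3)]]
    by metis
qed

lemma tensor_slices_obstruction:
  fixes K :: "('a::field^(2 \<times> 'b::finite)) set" and Z :: "('a^'b) set"
  defines "Y \<equiv> tensor_slice K"
  assumes K: "vec.subspace K" "vec.dim K \<le> 5"
    and det: "det2 p0 p1 \<noteq> 0" "det2 r0 r1 \<noteq> 0"
    and dimY: "2 \<le> vec.dim (Y p0)" "2 \<le> vec.dim (Y p1)" "2 \<le> vec.dim (Y r0)" "2 \<le> vec.dim (Y r1)"
    and Z: "vec.subspace Z" "0 < vec.dim (Z \<inter> Y p0)" "0 < vec.dim (Z \<inter> Y p1)"
      "vec.dim (Z \<inter> Y r0) = 0" "vec.dim (Z \<inter> Y r1) = 0"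
  shows False
proof -
  have Y: "vec.subspace (Y x)" for x unfolding Y_def using K(1) by (rule subspace_tensor_slice)
  have nz: "p0 \<noteq> 0" "p1 \<noteq> 0" "r0 \<noteq> 0" "r1 \<noteq> 0" using det by auto
  have det_rp: "det2 r p \<noteq> 0" if "r \<in> {r0, r1}" "p \<in> {p0, p1}" for r p
    using that nz Z(2-5) det2_ne_0_if_slices_differ[OF K(1), of r p Z] unfolding Y_def
    by (auto simp del: vec.dim_eq_0)
  define I where "I = Y p0 \<inter> Y p1"
  define H where "H = vec.span (Y p0 \<union> Y p1)"
  have I: "vec.subspace I" "I \<subseteq> H"
    unfolding I_def H_def using vec.subspace_inter[OF Y Y] vec.span_superset by blast+
  have ZI: "Z \<inter> I \<subseteq> {0}"
    using tensor_slice_Int_subset[OF K(1) det(1)] Z(4) unfolding I_def Y_def by auto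
  have H: "vec.subspace H" "vec.dim H + vec.dim I = vec.dim (Y p0) + vec.dim (Y p1)"
    unfolding H_def I_def using dim_Un_Int[OF Y Y] by simp_all
  have "vec.dim (Z \<inter> I) = 0" using ZI by simp
  then have ZH: "2 \<le> vec.dim (Z \<inter> H)"
    using dim_Int_span_Un_ge[OF Z(1) Y Y, of p0 p1] Z(2,3) unfolding H_def I_def Int_assoc
    by linarith
  have ZH_sub: "vec.subspace (Z \<inter> H)" using Z(1) H(1) by (rule vec.subspace_inter)
  have "vec.dim I + vec.dim (Z \<inter> H) \<le> vec.dim H"
    using I ZI by (intro dim_add_le_if_Int_trivial[OF I(1) ZH_sub]) auto
  moreover have "vec.dim (Y p0) + vec.dim (Y p1) + vec.dim (Y r0) \<le> vec.dim K + vec.dim I"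
    unfolding Y_def I_def using dim_tensor_slices_le[OF K(1) det(1)] det_rp by simp
  ultimately have small: "vec.dim I \<le> 1" "vec.dim H \<le> 3"
    using ZH H(2) K(2) dimY by linarith+
  show False
  proof (cases "Y r0 \<subseteq> H")
    case True
    then have "vec.dim (Y r0) + vec.dim (Z \<inter> H) \<le> vec.dim H"
      using Z(4) by (intro dim_add_le_if_Int_trivial[OF Y ZH_sub]) auto
    then show False using small ZH dimY by linarith
  next
    case False
    then obtain y where "y \<in> Y r0" "y \<notin> H" by blast
    then have "Y r1 \<subseteq> I"
      unfolding Y_def I_def H_def using dimY K det det_rp
      by (intro tensor_slice_subset_Int) (auto simp: Y_def)
    then show False using vec.dim_subset[of "Y r1" I] small dimY by linarith
  qed
qed

definition contains_product :: "('a::field^(2 \<times> 2 \<times> 'c::finite)) set \<Rightarrow> 'a^2 \<Rightarrow> 'a^2 \<Rightarrow> bool" where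
  "contains_product K p q \<longleftrightarrow> (\<exists>z. z \<noteq> 0 \<and> p \<otimes> q \<otimes> z \<in> K)"

lemma contains_product_iff_dim:
  assumes "q \<noteq> 0"
  shows "contains_product K p q \<longleftrightarrow> 0 < vec.dim (range (vec_tensor q) \<inter> tensor_slice K p)"
proof
  assume "contains_product K p q"
  then obtain z where "z \<noteq> 0" "p \<otimes> q \<otimes> z \<in> K" unfolding contains_product_def by blast
  then have sub: "{q \<otimes> z} \<subseteq> range (vec_tensor q) \<inter> tensor_slice K p"
    and nz: "q \<otimes> z \<noteq> 0"
    using assms by (auto simp: tensor_slice_def)
  have "vec.dim {q \<otimes> z} \<le> vec.dim (range (vec_tensor q) \<inter> tensor_slice K p)"
    using sub by (rule vec.dim_subset)
  moreover have "vec.dim {q \<otimes> z} = 1" using nz by simp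
  ultimately show "0 < vec.dim (range (vec_tensor q) \<inter> tensor_slice K p)" by linarith
next
  assume "0 < vec.dim (range (vec_tensor q) \<inter> tensor_slice K p)"
  then have "\<not> range (vec_tensor q) \<inter> tensor_slice K p \<subseteq> {0}"
    by (metis less_irrefl vec.dim_eq_0)
  then obtain w where "w \<in> range (vec_tensor q) \<inter> tensor_slice K p" "w \<noteq> 0"
    by blast
  then show "contains_product K p q" unfolding contains_product_def tensor_slice_def by auto
qed

lemma two_le_dim_tensor_slice:
  assumes K: "vec.subspace K" and "det2 q t \<noteq> 0" "contains_product K p q" "contains_product K p t"
  shows "2 \<le> vec.dim (tensor_slice K p)"
proof -
  have "q \<noteq> 0" "t \<noteq> 0" using assms(2) by auto
  define Zq where "Zq = range (vec_tensor q) \<inter> tensor_slice K p"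
  define Zt where "Zt = range (vec_tensor t) \<inter> tensor_slice K p"
  have sub: "vec.subspace Zq" "vec.subspace Zt"
    unfolding Zq_def Zt_def
    by (intro vec.subspace_inter vec.linear_subspace_image[OF linear_vec_tensor]
          vec.subspace_UNIV subspace_tensor_slice K)+
  have "Zq \<inter> Zt \<subseteq> {0}"
  proof
    fix w assume "w \<in> Zq \<inter> Zt"
    then obtain a b where a: "w = q \<otimes> a" and b: "w = t \<otimes> b" unfolding Zq_def Zt_def by blast
    have "det2 q t *s a = contract_det t w" by (simp add: a)
    also have "\<dots> = 0" by (simp add: b)
    finally show "w \<in> {0}" using assms(2) a by simp
  qed
  then have "vec.dim (Zq \<inter> Zt) = 0" by simp
  moreover have "Zq \<union> Zt \<subseteq> tensor_slice K p" unfolding Zq_def Zt_def by blast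
  ultimately have "vec.dim Zq + vec.dim Zt \<le> vec.dim (tensor_slice K p)"
    using dim_add_le_dim_Int[OF sub] by (metis add.right_neutral)
  moreover have "0 < vec.dim Zq" "0 < vec.dim Zt"
    unfolding Zq_def Zt_def using assms(3,4) \<open>q \<noteq> 0\<close> \<open>t \<noteq> 0\<close> contains_product_iff_dim by blast+
  ultimately show ?thesis by linarith
qed

lemma product_configuration_impossible:
  fixes K :: "('a::field^(2 \<times> 2 \<times> 'c::finite)) set"
  assumes K: "vec.subspace K" "vec.dim K \<le> 5"
    and det: "det2 p0 p1 \<noteq> 0" "det2 r0 r1 \<noteq> 0" "det2 q t \<noteq> 0" "det2 s s' \<noteq> 0"
    and "contains_product K p0 q" "contains_product K p0 t" "contains_product K p1 q" "contains_product K p1 t"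
    and "contains_product K r0 s" "contains_product K r0 s'" "contains_product K r1 s" "contains_product K r1 s'"
    and "\<not> contains_product K r0 q" "\<not> contains_product K r1 q"
  shows False
proof (rule tensor_slices_obstruction[OF K det(1,2)])
  have "q \<noteq> 0" using det(3) by auto
  show "vec.subspace (range (vec_tensor q))"
    by (intro vec.linear_subspace_image[OF linear_vec_tensor] vec.subspace_UNIV)
  show "0 < vec.dim (range (vec_tensor q) \<inter> tensor_slice K p0)"
    "0 < vec.dim (range (vec_tensor q) \<inter> tensor_slice K p1)"
    using assms(7,9) contains_product_iff_dim[OF \<open>q \<noteq> 0\<close>] by blast+
  show "vec.dim (range (vec_tensor q) \<inter> tensor_slice K r0) = 0"
    "vec.dim (range (vec_tensor q) \<inter> tensor_slice K r1) = 0"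
    using assms(15,16) contains_product_iff_dim[OF \<open>q \<noteq> 0\<close>, of K] by (simp_all del: vec.dim_eq_0)
  show "2 \<le> vec.dim (tensor_slice K p0)" "2 \<le> vec.dim (tensor_slice K p1)"
    "2 \<le> vec.dim (tensor_slice K r0)" "2 \<le> vec.dim (tensor_slice K r1)"
    using assms(7-14) two_le_dim_tensor_slice[OF K(1)] det(3,4) by blast+
qed

subsection \<open>Assemblages of rank-one measurements\<close>

lemma sum_UNIV_prod:
  "(\<Sum>u\<in>(UNIV :: ('a::finite \<times> 'b::finite) set). f u) = (\<Sum>a\<in>UNIV. \<Sum>b\<in>UNIV. f (a, b))"
  by (simp add: sum.cartesian_product flip: UNIV_Times_UNIV)

lemma ptrace_proj_onto_mult_vec_nth:
  fixes \<rho> :: "complex^(2 \<times> 2 \<times> 2)^(2 \<times> 2 \<times> 2)"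
  shows "(ptrace_AB (tensor_PQ1 (proj_onto \<pi>) (proj_onto \<kappa>) ** \<rho>) *v x) $ k =
    (\<Sum>i\<in>UNIV. \<Sum>j\<in>UNIV. cnj (\<pi> $ i) * cnj (\<kappa> $ j) * (\<rho> *v (\<pi> \<otimes> \<kappa> \<otimes> x)) $ (i, j, k))
      / (cinner \<pi> \<pi> * cinner \<kappa> \<kappa>)"
  using exhaust_2[of k]
  unfolding ptrace_AB_def tensor_PQ1_def proj_onto_def matrix_vector_mult_def matrix_matrix_mult_def
  by (elim disjE) (simp_all add: sum_UNIV_prod sum_2 algebra_simps add_divide_distrib)

lemma cinner_ptrace_proj_onto:
  fixes \<rho> :: "complex^(2 \<times> 2 \<times> 2)^(2 \<times> 2 \<times> 2)"
  shows "cinner x (ptrace_AB (tensor_PQ1 (proj_onto \<pi>) (proj_onto \<kappa>) ** \<rho>) *v x) =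
    cinner (\<pi> \<otimes> \<kappa> \<otimes> x) (\<rho> *v (\<pi> \<otimes> \<kappa> \<otimes> x)) / (cinner \<pi> \<pi> * cinner \<kappa> \<kappa>)"
  unfolding cinner_def[of x] ptrace_proj_onto_mult_vec_nth cinner_def[of "\<pi> \<otimes> \<kappa> \<otimes> x"]
  by (simp add: sum_UNIV_prod sum_2 divide_inverse algebra_simps)

lemma ptrace_proj_onto_kernel_iff:
  fixes \<rho> :: "complex^(2 \<times> 2 \<times> 2)^(2 \<times> 2 \<times> 2)"
  assumes "psd \<rho>" "\<pi> \<noteq> 0" "\<kappa> \<noteq> 0"
  shows "ptrace_AB (tensor_PQ1 (proj_onto \<pi>) (proj_onto \<kappa>) ** \<rho>) *v x = 0 \<longleftrightarrow>
    \<rho> *v (\<pi> \<otimes> \<kappa> \<otimes> x) = 0"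
proof
  assume "ptrace_AB (tensor_PQ1 (proj_onto \<pi>) (proj_onto \<kappa>) ** \<rho>) *v x = 0"
  then have "cinner (\<pi> \<otimes> \<kappa> \<otimes> x) (\<rho> *v (\<pi> \<otimes> \<kappa> \<otimes> x)) = 0"
    using cinner_ptrace_proj_onto[of x \<pi> \<kappa> \<rho>] assms(2,3) by simp
  then show "\<rho> *v (\<pi> \<otimes> \<kappa> \<otimes> x) = 0" by (rule psd_kernel[OF assms(1)])
qed (simp add: vec_eq_iff ptrace_proj_onto_mult_vec_nth)

lemma rank_ptrace_proj_onto_eq_2_iff:
  fixes \<rho> :: "complex^(2 \<times> 2 \<times> 2)^(2 \<times> 2 \<times> 2)"
  assumes "psd \<rho>" "\<pi> \<noteq> 0" "\<kappa> \<noteq> 0"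
  shows "rank (ptrace_AB (tensor_PQ1 (proj_onto \<pi>) (proj_onto \<kappa>) ** \<rho>)) = 2 \<longleftrightarrow>
    \<not> contains_product {v. \<rho> *v v = 0} \<pi> \<kappa>"
  using full_rank_iff_trivial_kernel[of "ptrace_AB (tensor_PQ1 (proj_onto \<pi>) (proj_onto \<kappa>) ** \<rho>)"]
    ptrace_proj_onto_kernel_iff[OF assms]
  unfolding contains_product_def by auto

theorem lemma7:
  fixes \<rho> :: "complex^(2\<times>2\<times>2)^(2\<times>2\<times>2)"
    and P Q :: "nat \<Rightarrow> nat \<Rightarrow> complex^2^2"
  assumes "density_op \<rho>"
    and "rank \<rho> = 3"
    and "\<forall>x<2. nontrivial_pm (P 0 x) (P 1 x)"
    and "\<forall>y<2. nontrivial_pm (Q 0 y) (Q 1 y)"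
    and "Q 0 0 \<noteq> Q 0 1" and "Q 0 0 \<noteq> Q 1 1"
  shows "\<not> (\<forall>a<2. \<forall>b<2.
              rank (assemblage \<rho> P Q a b 0 0) = 1 \<and> rank (assemblage \<rho> P Q a b 1 1) = 1 \<and>
              rank (assemblage \<rho> P Q a b 0 1) = 2 \<and> rank (assemblage \<rho> P Q a b 1 0) = 2)
       \<and> \<not> (\<forall>a<2. \<forall>y<2.
              rank (assemblage \<rho> P Q a 0 0 y) = 1 \<and> rank (assemblage \<rho> P Q a 1 0 y) = 2 \<and>
              rank (assemblage \<rho> P Q a 0 1 y) = 2 \<and> rank (assemblage \<rho> P Q a 1 1 y) = 1)"
proof -
  define K where "K = {v. \<rho> *v v = 0}"
  have psd: "psd \<rho>" using assms(1) by (simp add: density_op_def)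
  have K: "vec.subspace K" "vec.dim K \<le> 5"
    using dim_null_space_add_rank_le[of \<rho>] assms(2) unfolding K_def
    by (simp_all add: vec.linear_subspace_kernel[OF matrix_vector_mul_linear_gen])
  obtain \<pi> where \<pi>: "\<And>a x. a < 2 \<Longrightarrow> x < 2 \<Longrightarrow> \<pi> a x \<noteq> 0 \<and> P a x = proj_onto (\<pi> a x)"
    and det_A: "det2 (\<pi> 0 0) (\<pi> 1 0) \<noteq> 0" "det2 (\<pi> 0 1) (\<pi> 1 1) \<noteq> 0"
    using measurements_proj_onto[OF assms(3)] by blast
  obtain \<kappa> where \<kappa>: "\<And>b y. b < 2 \<Longrightarrow> y < 2 \<Longrightarrow> \<kappa> b y \<noteq> 0 \<and> Q b y = proj_onto (\<kappa> b y)"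
    and det_B: "det2 (\<kappa> 0 0) (\<kappa> 1 0) \<noteq> 0" "det2 (\<kappa> 0 1) (\<kappa> 1 1) \<noteq> 0"
    using measurements_proj_onto[OF assms(4)] by blast
  have det_B': "det2 (\<kappa> 0 0) (\<kappa> 0 1) \<noteq> 0" "det2 (\<kappa> 1 0) (\<kappa> 1 1) \<noteq> 0"
    using assms(4,5) nontrivial_pm_complement_neq[of "Q 0 0" "Q 1 0" "Q 0 1" "Q 1 1"] \<kappa>
      det2_ne_0_if_proj_onto_ne by simp_all
  have product_iff: "contains_product K (\<pi> a x) (\<kappa> b y) \<longleftrightarrow> rank (assemblage \<rho> P Q a b x y) \<noteq> 2"
    if "a < 2" "b < 2" "x < 2" "y < 2" for a b x y
    using rank_ptrace_proj_onto_eq_2_iff[OF psd] \<pi>[OF that(1,3)] \<kappa>[OF that(2,4)]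
    unfolding assemblage_def K_def by auto
  show ?thesis (is "\<not> ?pattern1 \<and> \<not> ?pattern2")
  proof (intro conjI notI)
    assume ?pattern1
    then show False
      using product_configuration_impossible[OF K det_A det_B] by (simp add: product_iff)
  next
    assume ?pattern2
    then show False
      using product_configuration_impossible[OF K det_A det_B'] by (simp add: product_iff)
  qed
qed

end
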